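(* Let $a>0$, $\epsilon>0$, $n\in\mathbb{N}$, $\sigma_n=n^{-a}$, and let $A_n(q_1,\dot q_1)=\frac12|\dot q_1|^2+\sigma_n(1-\cos q_1)$ on $\mathbb{R}$. Let $t_0<t_2$ and $\bar t_1,\tilde t_1\in(t_0,t_2)$. Let $\bar q_1$ be a solution of the Euler–Lagrange equation of $A_n$ on $(t_0,\bar t_1)$ and on $(\bar t_1,t_2)$ with $\bar q_1(t_0)=0$, $\bar q_1(\bar t_1)=\pi$, $\bar q_1(t_2)=2\pi$, and let $\tilde q_1$ be a solution of the Euler–Lagrange equation of $A_n$ on $(t_0,\tilde t_1)$ and on $(\tilde t_1,t_2)$ with $\tilde q_1(t_0)=0$, $\tilde q_1(\tilde t_1)=\pi$, $\tilde q_1(t_2)=2\pi$. Let $\bar\omega_1'=\pi/(\bar t_1-t_0)$, $\bar\omega_1''=\pi/(t_2-\bar t_1)$, $\tilde\omega_1'=\pi/(\tilde t_1-t_0)$, $\tilde\omega_1''=\pi/(t_2-\tilde t_1)$ be the corresponding average speeds and $|\omega_1|=\max\{|\bar\omega_1'|,|\bar\omega_1''|,|\tilde\omega_1'|,|\tilde\omega_1''|\}$. If $|\omega_1|<n^{-\frac a2-\epsilon}$, then $$\Big|\int_{t_0}^{t_2}A_n(\bar q_1,\dot{\bar q}_1)\,dt-\int_{t_0}^{t_2}A_n(\tilde q_1,\dot{\tilde q}_1)\,dt\Big|\le C_1|\bar t_1-\tilde t_1|\,\sigma_n\exp\Big(-\frac{C_2\sqrt{\sigma_n}}{|\omega_1|}\Big),$$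 where $C_1,C_2$ are positive constants independent of $n$. *)

theory Defs
  imports "HOL-Analysis.Analysis"
begin

definition sigma :: "real \<Rightarrow> nat \<Rightarrow> real" where
  "sigma a n = real n powr (- a)"

definition lagr :: "real \<Rightarrow> real \<Rightarrow> real \<Rightarrow> real" where
  "lagr s x v = v\<^sup>2 / 2 + s * (1 - cos x)"

definition EL_sol :: "real \<Rightarrow> (real \<Rightarrow> real) \<Rightarrow> real \<Rightarrow> real \<Rightarrow> bool" where
  "EL_sol s q t t' \<longleftrightarrow>
     (\<forall>x\<in>{t<..<t'}. (q has_real_derivative deriv q x) (at x) \<and>
                    (deriv q has_real_derivative (s * sin (q x))) (at x))"

text \<open>Action on [t0,t2]; the derivative at the finitely many corner points is irrelevant.\<close>
definition action :: "real \<Rightarrow> (real \<Rightarrow> real) \<Rightarrow> real \<Rightarrow> real \<Rightarrow> real" where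
  "action s q t0 t2 = integral {t0..t2} (\<lambda>t. lagr s (q t) (deriv q t))"

end

theory Submission
  imports Defs
begin

text \<open>On each half of the rotation the energy \<open>E = q'\<^sup>2/2 - s (1 - cos q)\<close> is conserved and,
  since one endpoint is an equilibrium, positive; hence \<open>q' = F\<^sub>E(q)\<close> with
  \<open>F\<^sub>E x = sqrt (2 (E + s (1 - cos x)))\<close>. Substituting \<open>x = q t\<close>, a half-turn of duration
  \<open>T\<close> has action \<open>W(E) - E T\<close>, where \<open>W(E) = \<integral>\<^sub>0\<^sup>\<pi> F\<^sub>E\<close> and \<open>T = \<integral>\<^sub>0\<^sup>\<pi> 1/F\<^sub>E = W'(E)\<close>.
  Concavity of \<open>W\<close> makes \<open>W(E) - E T(E)\<close> Lipschitz in \<open>T\<close> with constant \<open>max E\<close>, and a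
  half-turn with average speed below \<open>sqrt s\<close> has exponentially small energy.\<close>

lemma one_minus_cos_ge_quartic:
  fixes x :: real assumes "0 \<le> x"
  shows "x\<^sup>2 / 2 - x ^ 4 / 24 \<le> 1 - cos x"
proof (cases "x = 0")
  case False
  then obtain t where t: "cos x = (\<Sum>m<4. cos_coeff m * x ^ m) + cos (t + 1/2 * real 4 * pi) / fact 4 * x ^ 4"
    using Maclaurin_cos_expansion2[of x 4] assms by auto
  have "(\<Sum>m<4. cos_coeff m * x ^ m) = 1 - x\<^sup>2 / 2"
    by (simp add: cos_coeff_def lessThan_nat_numeral fact_numeral)
  with t have "cos x = 1 - x\<^sup>2 / 2 + cos t * x ^ 4 / 24"
    by (simp add: fact_numeral cos_add)
  moreover have "cos t * x ^ 4 \<le> x ^ 4"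
    using mult_right_mono[OF cos_le_one[of t], of "x ^ 4"] by simp
  ultimately show ?thesis by simp
qed simp

lemma one_minus_cos_ge_square:
  fixes x :: real assumes "0 \<le> x" "x \<le> pi"
  shows "x\<^sup>2 / 12 \<le> 1 - cos x"
proof -
  have "x\<^sup>2 \<le> 3.15\<^sup>2"
    using assms pi_approx by (intro power_mono) auto
  then have "x\<^sup>2 \<le> 10"
    by (simp add: power2_eq_square)
  then have "x\<^sup>2 * x\<^sup>2 \<le> 10 * x\<^sup>2"
    by (intro mult_right_mono) auto
  then have "x ^ 4 \<le> 10 * x\<^sup>2"
    by (simp add: power4_eq_xxxx power2_eq_square)
  then show ?thesis using one_minus_cos_ge_quartic[OF assms(1)] by simp
qed

lemma abs_sin_mult_le:
  fixes s x v :: real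
  assumes "s \<ge> 0" and "v\<^sup>2 \<le> 2 * s * (1 - cos x)"
  shows "\<bar>sin x * v\<bar> \<le> 2 * sqrt s * (1 - cos x)"
proof (rule power2_le_imp_le)
  have "2 * (1 - cos x) - (sin x)\<^sup>2 = (1 - cos x)\<^sup>2"
    by (simp add: sin_squared_eq power2_eq_square algebra_simps)
  then have "(sin x)\<^sup>2 \<le> 2 * (1 - cos x)"
    by (smt (verit) zero_le_power2)
  then have "\<bar>sin x * v\<bar>\<^sup>2 \<le> (2 * (1 - cos x)) * (2 * s * (1 - cos x))"
    using assms by (simp add: power_mult_distrib mult_mono)
  also have "\<dots> = (2 * sqrt s * (1 - cos x))\<^sup>2"
    using assms(1) by (simp add: power_mult_distrib) (simp add: power2_eq_square algebra_simps)
  finally show "\<bar>sin x * v\<bar>\<^sup>2 \<le> (2 * sqrt s * (1 - cos x))\<^sup>2" .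
qed (use assms in simp)

lemma sqrt_le_tangent:
  fixes a d :: real
  assumes "a > 0" "a\<^sup>2 + 2 * d \<ge> 0"
  shows "sqrt (a\<^sup>2 + 2 * d) \<le> a + d / a"
proof -
  define b where "b = sqrt (a\<^sup>2 + 2 * d)"
  have "b\<^sup>2 = a\<^sup>2 + 2 * d" unfolding b_def using assms(2) by simp
  then have "a + d / a - b = (a - b)\<^sup>2 / (2 * a)"
    using assms(1) by (simp add: field_simps power2_eq_square)
  then show ?thesis unfolding b_def using assms(1) by (smt (verit) divide_nonneg_pos zero_le_power2)
qed

lemma has_integral_reflect_shift_real:
  fixes f :: "real \<Rightarrow> 'a::banach"
  assumes "(f has_integral I) {a..b}"
  shows "((\<lambda>x. f (c - x)) has_integral I) {c - b..c - a}"
proof -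
  have "((f \<circ> (+) c) has_integral I) {a - c..b - c}"
    using assms by (simp add: has_integral_shift_Icc_real)
  then have "((\<lambda>x. (f \<circ> (+) c) (- x)) has_integral I) {- (b - c)..- (a - c)}"
    by (rule iffD2[OF has_integral_reflect_real])
  moreover have "(\<lambda>x. (f \<circ> (+) c) (- x)) = (\<lambda>x. f (c - x))"
    by (simp add: o_def)
  moreover have "{- (b - c)..- (a - c)} = {c - b..c - a}"
    by simp
  ultimately show ?thesis
    by (simp only:)
qed

text \<open>\<open>H\<close> is the conserved energy \<open>v\<^sup>2/2 - s (1 - cos x)\<close> of \<open>lagr s\<close>, and a forward-moving
  solution of energy \<open>H\<close> passes position \<open>x\<close> with speed \<open>pendulum_speed s H x\<close>. The duration
  of, and \<open>\<integral> v dx\<close> along, a half-turn from \<open>0\<close> to \<open>\<pi>\<close> are \<open>transit_time\<close> and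
  \<open>reduced_action\<close>; by the symmetry \<open>x \<mapsto> 2\<pi> - x\<close> the same holds for the half-turn from \<open>\<pi>\<close>
  to \<open>2\<pi>\<close>.\<close>
definition pendulum_speed :: "real \<Rightarrow> real \<Rightarrow> real \<Rightarrow> real" where
  "pendulum_speed s H x = sqrt (2 * (H + s * (1 - cos x)))"

definition transit_time :: "real \<Rightarrow> real \<Rightarrow> real" where
  "transit_time s H = integral {0..pi} (\<lambda>x. 1 / pendulum_speed s H x)"

definition reduced_action :: "real \<Rightarrow> real \<Rightarrow> real" where
  "reduced_action s H = integral {0..pi} (pendulum_speed s H)"

definition swing_action :: "real \<Rightarrow> real \<Rightarrow> real" where
  "swing_action s H = reduced_action s H - H * transit_time s H"

lemma pendulum_speed_pos: "s \<ge> 0 \<Longrightarrow> H > 0 \<Longrightarrow> pendulum_speed s H x > 0"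
  unfolding pendulum_speed_def by (simp add: add_pos_nonneg)

lemma pendulum_speed_squared:
  "s \<ge> 0 \<Longrightarrow> H > 0 \<Longrightarrow> (pendulum_speed s H x)\<^sup>2 = 2 * (H + s * (1 - cos x))"
  unfolding pendulum_speed_def by (simp add: add_pos_nonneg less_imp_le)

lemma pendulum_speed_reflect: "pendulum_speed s H (2 * pi - x) = pendulum_speed s H x"
  by (simp add: pendulum_speed_def cos_diff)

lemma continuous_on_pendulum_speed: "continuous_on A (pendulum_speed s H)"
  unfolding pendulum_speed_def by (intro continuous_intros)

lemma continuous_on_inverse_pendulum_speed:
  "s \<ge> 0 \<Longrightarrow> H > 0 \<Longrightarrow> continuous_on A (\<lambda>x. 1 / pendulum_speed s H x)"
  by (intro continuous_intros continuous_on_pendulum_speed) (metis pendulum_speed_pos less_irrefl)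

text \<open>\<open>transit_time s\<close> is the derivative of the concave function \<open>reduced_action s\<close>.\<close>
lemma reduced_action_le_tangent:
  assumes "s \<ge> 0" "H > 0" "H' > 0"
  shows "reduced_action s H' \<le> reduced_action s H + (H' - H) * transit_time s H"
proof -
  let ?F = "pendulum_speed s H"
  have int: "?F integrable_on {0..pi}" "(\<lambda>x. 1 / ?F x) integrable_on {0..pi}"
    "pendulum_speed s H' integrable_on {0..pi}"
    "(\<lambda>x. ?F x + (H' - H) * (1 / ?F x)) integrable_on {0..pi}"
    using assms by (auto intro!: integrable_continuous_real continuous_on_pendulum_speed
        continuous_on_inverse_pendulum_speed continuous_intros
        simp: pendulum_speed_pos less_imp_neq[symmetric])
  have "reduced_action s H' \<le> integral {0..pi} (\<lambda>x. ?F x + (H' - H) * (1 / ?F x))"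
    unfolding reduced_action_def
  proof (rule integral_le)
    fix x
    have "pendulum_speed s H' x = sqrt ((?F x)\<^sup>2 + 2 * (H' - H))"
      using assms by (simp add: pendulum_speed_squared) (simp add: pendulum_speed_def algebra_simps)
    also have "\<dots> \<le> ?F x + (H' - H) / ?F x"
      using assms by (intro sqrt_le_tangent pendulum_speed_pos)
        (auto simp: pendulum_speed_squared add_pos_nonneg)
    finally show "pendulum_speed s H' x \<le> ?F x + (H' - H) * (1 / ?F x)" by simp
  qed (fact int)+
  also have "\<dots> = reduced_action s H + (H' - H) * transit_time s H"
    unfolding reduced_action_def transit_time_def
    by (intro integral_unique has_integral_add has_integral_mult_right integrable_integral int)
  finally show ?thesis .
qed

lemma swing_action_diff_le:
  assumes "s \<ge> 0" "H > 0" "H' > 0"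
  shows "\<bar>swing_action s H - swing_action s H'\<bar>
           \<le> max H H' * \<bar>transit_time s H - transit_time s H'\<bar>"
proof -
  have "H' * (transit_time s H' - transit_time s H) \<le> swing_action s H - swing_action s H'"
    using reduced_action_le_tangent[OF assms] by (simp add: swing_action_def algebra_simps)
  moreover have "swing_action s H - swing_action s H' \<le> H * (transit_time s H' - transit_time s H)"
    using reduced_action_le_tangent[OF assms(1,3,2)] by (simp add: swing_action_def algebra_simps)
  moreover have "\<bar>H' * (transit_time s H' - transit_time s H)\<bar> \<le> max H H' * \<bar>transit_time s H - transit_time s H'\<bar>"
    "\<bar>H * (transit_time s H' - transit_time s H)\<bar> \<le> max H H' * \<bar>transit_time s H - transit_time s H'\<bar>"
    using assms by (auto simp: abs_mult abs_minus_commute intro!: mult_right_mono)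
  ultimately show ?thesis by linarith
qed

lemma exp_bounds_of_abs_deriv_le:
  fixes u u' :: "real \<Rightarrow> real"
  assumes "\<alpha> \<le> \<beta>" and cont: "continuous_on {\<alpha>..\<beta>} u"
    and deriv: "\<And>t. t \<in> {\<alpha><..<\<beta>} \<Longrightarrow> (u has_real_derivative u' t) (at t)"
    and bound: "\<And>t. t \<in> {\<alpha><..<\<beta>} \<Longrightarrow> \<bar>u' t\<bar> \<le> K * u t"
  shows "u \<beta> \<le> u \<alpha> * exp (K * (\<beta> - \<alpha>))" and "u \<alpha> \<le> u \<beta> * exp (K * (\<beta> - \<alpha>))"
proof -
  have "u \<beta> * exp (- K * \<beta>) \<le> u \<alpha> * exp (- K * \<alpha>)"
  proof (rule DERIV_nonpos_imp_decreasing_open[OF \<open>\<alpha> \<le> \<beta>\<close>, where f = "\<lambda>t. u t * exp (- K * t)"])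
    fix t assume "\<alpha> < t" "t < \<beta>"
    then have "((\<lambda>t. u t * exp (- K * t)) has_real_derivative (u' t - K * u t) * exp (- K * t)) (at t)"
      by (auto intro!: derivative_eq_intros deriv simp: algebra_simps)
    moreover have "(u' t - K * u t) * exp (- K * t) \<le> 0"
      using bound[of t] \<open>\<alpha> < t\<close> \<open>t < \<beta>\<close> by (intro mult_nonpos_nonneg) (auto simp: abs_le_iff)
    ultimately show "\<exists>y. ((\<lambda>t. u t * exp (- K * t)) has_real_derivative y) (at t) \<and> y \<le> 0"
      by blast
  qed (intro continuous_intros cont)
  then show "u \<beta> \<le> u \<alpha> * exp (K * (\<beta> - \<alpha>))"
    by (simp add: exp_diff exp_minus field_simps)
  have "u \<alpha> * exp (K * \<alpha>) \<le> u \<beta> * exp (K * \<beta>)"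
  proof (rule DERIV_nonneg_imp_increasing_open[OF \<open>\<alpha> \<le> \<beta>\<close>, where f = "\<lambda>t. u t * exp (K * t)"])
    fix t assume "\<alpha> < t" "t < \<beta>"
    then have "((\<lambda>t. u t * exp (K * t)) has_real_derivative (u' t + K * u t) * exp (K * t)) (at t)"
      by (auto intro!: derivative_eq_intros deriv simp: algebra_simps)
    moreover have "(u' t + K * u t) * exp (K * t) \<ge> 0"
      using bound[of t] \<open>\<alpha> < t\<close> \<open>t < \<beta>\<close> by (intro mult_nonneg_nonneg) (auto simp: abs_le_iff)
    ultimately show "\<exists>y. ((\<lambda>t. u t * exp (K * t)) has_real_derivative y) (at t) \<and> y \<ge> 0"
      by blast
  qed (intro continuous_intros cont)
  then show "u \<alpha> \<le> u \<beta> * exp (K * (\<beta> - \<alpha>))"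
    by (simp add: exp_diff field_simps)
qed

lemma EL_sol_energy_const:
  assumes "EL_sol s q \<alpha> \<beta>"
  obtains H where "\<And>t. t \<in> {\<alpha><..<\<beta>} \<Longrightarrow> (deriv q t)\<^sup>2 / 2 - s * (1 - cos (q t)) = H"
proof -
  have "\<exists>H. \<forall>t\<in>{\<alpha><..<\<beta>}. (deriv q t)\<^sup>2 / 2 - s * (1 - cos (q t)) = H"
  proof (rule has_field_derivative_zero_constant)
    fix t assume "t \<in> {\<alpha><..<\<beta>}"
    then have "((\<lambda>t. (deriv q t)\<^sup>2 / 2 - s * (1 - cos (q t))) has_real_derivative
        deriv q t * (s * sin (q t)) - s * (sin (q t) * deriv q t)) (at t)"
      using assms unfolding EL_sol_def by (auto intro!: derivative_eq_intros)
    then show "((\<lambda>t. (deriv q t)\<^sup>2 / 2 - s * (1 - cos (q t))) has_real_derivative 0)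
        (at t within {\<alpha><..<\<beta>})"
      by (simp add: has_field_derivative_at_within algebra_simps)
  qed simp
  then show ?thesis using that by blast
qed

text \<open>If \<open>H \<le> 0\<close>, then \<open>u = 1 - cos q\<close> satisfies \<open>\<bar>u'\<bar> \<le> 2 sqrt s u\<close>, so it cannot leave
  the value \<open>0\<close> it takes at the equilibrium endpoint.\<close>
lemma EL_sol_energy_pos:
  assumes "s > 0" "\<alpha> < \<beta>" and cont: "continuous_on {\<alpha>..\<beta>} q" and EL: "EL_sol s q \<alpha> \<beta>"
    and ends: "q \<alpha> = c" "q \<beta> = c + pi" "c = 0 \<or> c = pi"
    and energy: "\<And>t. t \<in> {\<alpha><..<\<beta>} \<Longrightarrow> (deriv q t)\<^sup>2 / 2 - s * (1 - cos (q t)) = H"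
  shows "H > 0"
proof (rule ccontr)
  assume "\<not> H > 0"
  define u where "u t = 1 - cos (q t)" for t
  have du: "(u has_real_derivative sin (q t) * deriv q t) (at t)" if "t \<in> {\<alpha><..<\<beta>}" for t
    using EL that unfolding EL_sol_def u_def by (auto intro!: derivative_eq_intros)
  have bound: "\<bar>sin (q t) * deriv q t\<bar> \<le> 2 * sqrt s * u t" if "t \<in> {\<alpha><..<\<beta>}" for t
    unfolding u_def using energy[OF that] \<open>\<not> H > 0\<close> \<open>s > 0\<close> by (intro abs_sin_mult_le) auto
  have "continuous_on {\<alpha>..\<beta>} u"
    unfolding u_def by (intro continuous_intros cont)
  note bounds = exp_bounds_of_abs_deriv_le[OF less_imp_le[OF \<open>\<alpha> < \<beta>\<close>] this du bound]
  have "u \<alpha> = 0 \<and> u \<beta> = 2 \<or> u \<alpha> = 2 \<and> u \<beta> = 0"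
    using ends by (auto simp: u_def)
  then show False using bounds by auto
qed

lemma deriv_pos_of_nonzero:
  fixes q q' :: "real \<Rightarrow> real"
  assumes "\<alpha> < \<beta>" "continuous_on {\<alpha>..\<beta>} q" "q \<alpha> < q \<beta>"
    and deriv: "\<And>t. t \<in> {\<alpha><..<\<beta>} \<Longrightarrow> (q has_real_derivative q' t) (at t)"
    and "continuous_on {\<alpha><..<\<beta>} q'"
    and nonzero: "\<And>t. t \<in> {\<alpha><..<\<beta>} \<Longrightarrow> q' t \<noteq> 0"
    and t: "t \<in> {\<alpha><..<\<beta>}"
  shows "q' t > 0"
proof (rule ccontr)
  assume "\<not> q' t > 0"
  obtain l z where z: "\<alpha> < z" "z < \<beta>" "(q has_real_derivative l) (at z)"
    and l: "q \<beta> - q \<alpha> = (\<beta> - \<alpha>) * l"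
    using MVT[OF assms(1,2)] deriv unfolding real_differentiable_def
    by (metis greaterThanLessThan_iff)
  have "l = q' z"
    using z by (intro DERIV_unique[OF z(3) deriv]) simp
  have "0 < (\<beta> - \<alpha>) * l"
    using l assms(3) by simp
  then have "q' z > 0"
    using \<open>l = q' z\<close> assms(1) by (simp add: zero_less_mult_iff)
  have "connected (q' ` {\<alpha><..<\<beta>})"
    by (rule connected_continuous_image) (use assms in auto)
  then have "{q' t..q' z} \<subseteq> q' ` {\<alpha><..<\<beta>}"
    by (rule connected_contains_Icc) (use t z in auto)
  moreover have "0 \<in> {q' t..q' z}"
    using \<open>\<not> q' t > 0\<close> \<open>q' z > 0\<close> by simp
  ultimately show False
    using nonzero by (metis imageE subsetD)
qed

lemma has_integral_substitution_increasing:
  fixes q q' f :: "real \<Rightarrow> real"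
  assumes "\<alpha> \<le> \<beta>" and cont: "continuous_on {\<alpha>..\<beta>} q"
    and deriv: "\<And>t. t \<in> {\<alpha><..<\<beta>} \<Longrightarrow> (q has_real_derivative q' t) (at t)"
    and nonneg: "\<And>t. t \<in> {\<alpha><..<\<beta>} \<Longrightarrow> q' t \<ge> 0"
    and fcont: "continuous_on {q \<alpha>..q \<beta>} f"
  shows "((\<lambda>t. q' t * f (q t)) has_integral integral {q \<alpha>..q \<beta>} f) {\<alpha>..\<beta>}"
proof -
  have mono: "q x \<le> q y" if "\<alpha> \<le> x" "x \<le> y" "y \<le> \<beta>" for x y
  proof (rule DERIV_nonneg_imp_increasing_open[OF \<open>x \<le> y\<close>])
    fix u assume "x < u" "u < y"
    then have "u \<in> {\<alpha><..<\<beta>}" using that by auto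
    then show "\<exists>d. (q has_real_derivative d) (at u) \<and> d \<ge> 0"
      using deriv nonneg by blast
  next
    show "continuous_on {x..y} q"
      using that by (intro continuous_on_subset[OF cont]) auto
  qed
  have sub: "q ` {\<alpha>..\<beta>} \<subseteq> {q \<alpha>..q \<beta>}"
  proof (rule image_subsetI)
    fix t assume "t \<in> {\<alpha>..\<beta>}"
    then show "q t \<in> {q \<alpha>..q \<beta>}"
      using mono[of \<alpha> t] mono[of t \<beta>] by simp
  qed
  have dq: "(q has_real_derivative q' t) (at t within {\<alpha>..\<beta>})" if "t \<in> {\<alpha>..\<beta>} - {\<alpha>, \<beta>}" for t
    using deriv[of t] that by (auto intro: has_field_derivative_at_within)
  have "((\<lambda>t. q' t *\<^sub>R f (q t)) has_integral
      integral {q \<alpha>..q \<beta>} f - integral {q \<beta>..q \<alpha>} f) {\<alpha>..\<beta>}"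
    by (rule has_integral_substitution_general[of "{\<alpha>, \<beta>}", OF _ \<open>\<alpha> \<le> \<beta>\<close> sub fcont cont dq]) simp
  moreover have "integral {q \<beta>..q \<alpha>} f = 0"
    using mono[OF order_refl \<open>\<alpha> \<le> \<beta>\<close> order_refl] by (intro integral_unique has_integral_null_real) simp
  ultimately show ?thesis by simp
qed

lemma integral_half_turn_eq:
  fixes f :: "real \<Rightarrow> real"
  assumes "c = 0 \<or> c = pi" and "f integrable_on {c..c + pi}"
    and symm: "\<And>x. f (2 * pi - x) = f x"
  shows "integral {c..c + pi} f = integral {0..pi} f"
proof (cases "c = 0")
  case False
  then have "{c..c + pi} = {pi..2 * pi}"
    using assms(1) by simp
  then have "(f has_integral integral {c..c + pi} f) {pi..2 * pi}"
    using integrable_integral[OF assms(2)] by simp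
  from has_integral_reflect_shift_real[OF this, of "2 * pi"]
  have "(f has_integral integral {c..c + pi} f) {0..pi}"
    by (simp only: symm diff_self) simp
  then show ?thesis by (rule integral_unique[symmetric])
qed simp

lemma has_integral_half_turn_substitution:
  fixes q q' f :: "real \<Rightarrow> real"
  assumes "\<alpha> \<le> \<beta>" "continuous_on {\<alpha>..\<beta>} q"
    and "\<And>t. t \<in> {\<alpha><..<\<beta>} \<Longrightarrow> (q has_real_derivative q' t) (at t)"
    and "\<And>t. t \<in> {\<alpha><..<\<beta>} \<Longrightarrow> q' t \<ge> 0"
    and "q \<alpha> = c" "q \<beta> = c + pi" "c = 0 \<or> c = pi"
    and "continuous_on UNIV f" "\<And>x. f (2 * pi - x) = f x"
  shows "((\<lambda>t. q' t * f (q t)) has_integral integral {0..pi} f) {\<alpha>..\<beta>}"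
proof -
  have "integral {c..c + pi} f = integral {0..pi} f"
    using assms(7-9) by (intro integral_half_turn_eq integrable_continuous_real)
      (auto intro: continuous_on_subset)
  then show ?thesis
    using has_integral_substitution_increasing[OF assms(1-4), of f] assms(5,6,8)
    by (auto intro: continuous_on_subset)
qed

lemma EL_sol_speed:
  assumes s: "s > 0" and "\<alpha> < \<beta>" and cont: "continuous_on {\<alpha>..\<beta>} q" and EL: "EL_sol s q \<alpha> \<beta>"
    and ends: "q \<alpha> = c" "q \<beta> = c + pi" "c = 0 \<or> c = pi"
  obtains H where "H > 0" "\<And>t. t \<in> {\<alpha><..<\<beta>} \<Longrightarrow> deriv q t = pendulum_speed s H (q t)"
proof -
  obtain H where energy: "\<And>t. t \<in> {\<alpha><..<\<beta>} \<Longrightarrow> (deriv q t)\<^sup>2 / 2 - s * (1 - cos (q t)) = H"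
    using EL_sol_energy_const[OF EL] by blast
  have "H > 0"
    using EL_sol_energy_pos[OF s \<open>\<alpha> < \<beta>\<close> cont EL ends energy] .
  have sq: "(deriv q t)\<^sup>2 = (pendulum_speed s H (q t))\<^sup>2" if "t \<in> {\<alpha><..<\<beta>}" for t
    using energy[OF that] s \<open>H > 0\<close> by (simp add: pendulum_speed_squared)
  have dq: "(q has_real_derivative deriv q t) (at t)" if "t \<in> {\<alpha><..<\<beta>}" for t
    using EL that by (simp add: EL_sol_def)
  have "continuous_on {\<alpha><..<\<beta>} (deriv q)"
    using EL unfolding EL_sol_def by (meson DERIV_isCont continuous_at_imp_continuous_on)
  moreover have "deriv q t \<noteq> 0" if "t \<in> {\<alpha><..<\<beta>}" for t
    using sq[OF that] pendulum_speed_pos[of s H "q t"] s \<open>H > 0\<close> by auto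
  ultimately have "deriv q t > 0" if "t \<in> {\<alpha><..<\<beta>}" for t
    using deriv_pos_of_nonzero[OF \<open>\<alpha> < \<beta>\<close> cont _ dq] that ends by simp
  then have "deriv q t = pendulum_speed s H (q t)" if "t \<in> {\<alpha><..<\<beta>}" for t
    using sq[OF that] pendulum_speed_pos[of s H "q t"] s \<open>H > 0\<close> that
    by (simp add: less_imp_le)
  with \<open>H > 0\<close> show ?thesis using that by blast
qed

lemma EL_sol_half_swing:
  assumes s: "s > 0" and "\<alpha> < \<beta>" and cont: "continuous_on {\<alpha>..\<beta>} q" and EL: "EL_sol s q \<alpha> \<beta>"
    and ends: "q \<alpha> = c" "q \<beta> = c + pi" "c = 0 \<or> c = pi"
  obtains H where "H > 0" "transit_time s H = \<beta> - \<alpha>"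
    "((\<lambda>t. lagr s (q t) (deriv q t)) has_integral swing_action s H) {\<alpha>..\<beta>}"
proof -
  obtain H where "H > 0" and speed: "\<And>t. t \<in> {\<alpha><..<\<beta>} \<Longrightarrow> deriv q t = pendulum_speed s H (q t)"
    using EL_sol_speed[OF assms] by blast
  let ?F = "pendulum_speed s H"
  have pos: "?F x > 0" for x
    using s \<open>H > 0\<close> by (simp add: pendulum_speed_pos)
  have dq: "(q has_real_derivative deriv q t) (at t)" if "t \<in> {\<alpha><..<\<beta>}" for t
    using EL that by (simp add: EL_sol_def)
  have nonneg: "deriv q t \<ge> 0" if "t \<in> {\<alpha><..<\<beta>}" for t
    using speed[OF that] pos[of "q t"] by simp
  note subst = has_integral_half_turn_substitution[OF less_imp_le[OF \<open>\<alpha> < \<beta>\<close>] cont dq nonneg ends]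
  have "((\<lambda>t. H) has_integral H * (\<beta> - \<alpha>)) {\<alpha>..\<beta>}"
    using has_integral_const_real[of H \<alpha> \<beta>] \<open>\<alpha> < \<beta>\<close> by (simp add: mult.commute)
  then have action_integral:
    "((\<lambda>t. deriv q t * ?F (q t) - H) has_integral reduced_action s H - H * (\<beta> - \<alpha>)) {\<alpha>..\<beta>}"
    unfolding reduced_action_def
    by (intro has_integral_diff subst continuous_on_pendulum_speed pendulum_speed_reflect)
  have time_integral: "((\<lambda>t. deriv q t * (1 / ?F (q t))) has_integral transit_time s H) {\<alpha>..\<beta>}"
    unfolding transit_time_def using s \<open>H > 0\<close>
    by (intro subst continuous_on_inverse_pendulum_speed) (simp_all add: pendulum_speed_reflect)
  have "((\<lambda>t. 1) has_integral transit_time s H) {\<alpha>..\<beta>}"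
    by (rule has_integral_spike_finite[of "{\<alpha>, \<beta>}", OF _ _ time_integral])
      (use speed pos in \<open>auto simp: less_imp_neq[symmetric]\<close>)
  then have time: "transit_time s H = \<beta> - \<alpha>"
    using has_integral_const_real[of "1::real" \<alpha> \<beta>] \<open>\<alpha> < \<beta>\<close> by (simp add: has_integral_unique)
  have "((\<lambda>t. lagr s (q t) (deriv q t)) has_integral reduced_action s H - H * (\<beta> - \<alpha>)) {\<alpha>..\<beta>}"
  proof (rule has_integral_spike_finite[of "{\<alpha>, \<beta>}", OF _ _ action_integral])
    fix t assume "t \<in> {\<alpha>..\<beta>} - {\<alpha>, \<beta>}"
    then have t: "t \<in> {\<alpha><..<\<beta>}" by auto
    show "lagr s (q t) (deriv q t) = deriv q t * ?F (q t) - H"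
      using speed[OF t] s \<open>H > 0\<close> by (simp add: lagr_def power2_eq_square[symmetric] pendulum_speed_squared)
  qed simp
  then show ?thesis using that \<open>H > 0\<close> time by (simp add: swing_action_def)
qed

lemma arsinh_le_ln_3:
  fixes y :: real assumes "y \<ge> 1"
  shows "arsinh y \<le> ln (3 * y)"
proof -
  have "1 \<le> y\<^sup>2"
    using assms by (simp add: one_le_power)
  then have "y\<^sup>2 + 1 \<le> (2 * y)\<^sup>2"
    by (simp add: power_mult_distrib)
  then have "sqrt (y\<^sup>2 + 1) \<le> 2 * y"
    using assms by (intro real_le_lsqrt) auto
  then have "y + sqrt (y\<^sup>2 + 1) \<le> 3 * y"
    using assms by simp
  then show ?thesis
    unfolding arsinh_real_def using arsinh_real_aux[of y] by simp
qed

lemma transit_time_le: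
  assumes "s \<ge> 0" "H > 0"
  shows "transit_time s H \<le> pi / sqrt (2 * H)"
proof -
  have "transit_time s H \<le> integral {0..pi} (\<lambda>x. 1 / sqrt (2 * H))"
    unfolding transit_time_def
  proof (rule integral_le)
    fix x
    have "sqrt (2 * H) \<le> pendulum_speed s H x"
      unfolding pendulum_speed_def using assms by (intro real_sqrt_le_mono) simp
    then show "1 / pendulum_speed s H x \<le> 1 / sqrt (2 * H)"
      using assms by (simp add: frac_le)
  qed (use assms in \<open>simp_all add: integrable_continuous_real continuous_on_inverse_pendulum_speed\<close>)
  then show ?thesis by simp
qed

lemma has_integral_inverse_sqrt_arsinh:
  fixes k r b :: real
  assumes "k > 0" "r > 0" "b \<ge> 0"
  shows "((\<lambda>x. 1 / sqrt ((k * x)\<^sup>2 + r\<^sup>2)) has_integral arsinh (k * b / r) / k) {0..b}"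
proof -
  have "((\<lambda>x. 1 / sqrt ((k * x)\<^sup>2 + r\<^sup>2)) has_integral arsinh (k * b / r) / k - arsinh (k * 0 / r) / k) {0..b}"
  proof (rule fundamental_theorem_of_calculus)
    fix x :: real
    have "((\<lambda>x. k * x / r) has_real_derivative k / r) (at x)"
      using DERIV_cdivide[OF DERIV_cmult_Id[of k], of r] by simp
    from DERIV_cdivide[OF DERIV_chain2[OF arsinh_real_has_field_derivative this], of k]
    have "((\<lambda>x. arsinh (k * x / r) / k) has_real_derivative
        1 / sqrt ((k * x / r)\<^sup>2 + 1) * (k / r) / k) (at x)" .
    moreover have "1 / sqrt ((k * x / r)\<^sup>2 + 1) * (k / r) / k = 1 / (r * sqrt ((k * x / r)\<^sup>2 + 1))"
      using \<open>k > 0\<close> by simp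
    moreover have "r * sqrt ((k * x / r)\<^sup>2 + 1) = sqrt (r\<^sup>2 * ((k * x / r)\<^sup>2 + 1))"
      using \<open>r > 0\<close> by (simp add: real_sqrt_mult)
    moreover have "r\<^sup>2 * ((k * x / r)\<^sup>2 + 1) = (k * x)\<^sup>2 + r\<^sup>2"
      using \<open>r > 0\<close> by (simp add: field_simps)
    ultimately have "((\<lambda>x. arsinh (k * x / r) / k) has_real_derivative 1 / sqrt ((k * x)\<^sup>2 + r\<^sup>2)) (at x)"
      by simp
    then show "((\<lambda>x. arsinh (k * x / r) / k) has_vector_derivative
        1 / sqrt ((k * x)\<^sup>2 + r\<^sup>2)) (at x within {0..b})"
      by (simp add: has_real_derivative_iff_has_vector_derivative[symmetric] has_field_derivative_at_within)
  qed (use assms in simp)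
  then show ?thesis by simp
qed

lemma transit_time_le_arsinh:
  assumes "s > 0" "H > 0"
  defines "k \<equiv> sqrt (s / 6)"
  shows "k * transit_time s H \<le> arsinh (k * pi / sqrt (2 * H))"
proof -
  define r where "r = sqrt (2 * H)"
  have "k > 0" "r > 0" using assms by (auto simp: k_def r_def)
  have bound: "1 / pendulum_speed s H x \<le> 1 / sqrt ((k * x)\<^sup>2 + r\<^sup>2)" if "x \<in> {0..pi}" for x
  proof -
    have "(k * x)\<^sup>2 = s * (x\<^sup>2 / 6)"
      using assms by (simp add: k_def power_mult_distrib)
    also have "\<dots> \<le> s * (2 * (1 - cos x))"
      using one_minus_cos_ge_square[of x] that assms by (intro mult_left_mono) auto
    finally have "sqrt ((k * x)\<^sup>2 + r\<^sup>2) \<le> pendulum_speed s H x"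
      unfolding pendulum_speed_def r_def using assms by (intro real_sqrt_le_mono) (simp add: algebra_simps)
    then show ?thesis
      using \<open>r > 0\<close> assms by (intro divide_left_mono mult_pos_pos) (auto simp: add_nonneg_pos pendulum_speed_pos)
  qed
  have "((\<lambda>x. 1 / pendulum_speed s H x) has_integral transit_time s H) {0..pi}"
    unfolding transit_time_def using assms
    by (intro integrable_integral integrable_continuous_real continuous_on_inverse_pendulum_speed) simp_all
  from has_integral_le[OF this has_integral_inverse_sqrt_arsinh[OF \<open>k > 0\<close> \<open>r > 0\<close>] bound]
  have "transit_time s H \<le> arsinh (k * pi / r) / k"
    by simp
  from mult_left_mono[OF this, of k] show ?thesis
    using \<open>k > 0\<close> by (simp add: r_def)
qed

lemma energy_lt_of_slow_transit:
  assumes s: "s > 0" and H: "H > 0" and slow: "pi < sqrt s * transit_time s H"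
  shows "2 * H < s"
proof -
  have "pi < sqrt s * (pi / sqrt (2 * H))"
    using slow transit_time_le[of s H] s H by (smt (verit) mult_left_mono real_sqrt_ge_zero)
  then have "sqrt (2 * H) < sqrt s"
    using H by (simp add: field_simps)
  then show ?thesis
    by simp
qed

lemma sqrt_energy_le_exp_transit_time:
  assumes s: "s > 0" and H: "H > 0" and slow: "pi < sqrt s * transit_time s H"
  defines "k \<equiv> sqrt (s / 6)"
  shows "sqrt (2 * H) \<le> 3 * k * pi * exp (- (k * transit_time s H))"
proof -
  define r where "r = sqrt (2 * H)"
  have "k > 0" "r > 0"
    using s H by (auto simp: k_def r_def)
  have "3\<^sup>2 \<le> pi\<^sup>2"
    using pi_gt3 by (intro power_mono) auto
  then have "s * 6 \<le> s * pi\<^sup>2"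
    using s by (intro mult_left_mono) auto
  then have "2 * H < s / 6 * pi\<^sup>2"
    using energy_lt_of_slow_transit[OF s H slow] by simp
  also have "\<dots> = (k * pi)\<^sup>2"
    using s by (simp add: k_def power_mult_distrib)
  finally have "r < k * pi"
    unfolding r_def using \<open>k > 0\<close> by (simp add: real_less_lsqrt)
  then have y: "1 \<le> k * pi / r"
    using \<open>r > 0\<close> by simp
  have "k * transit_time s H \<le> ln (3 * (k * pi / r))"
    using transit_time_le_arsinh[OF s H] arsinh_le_ln_3[OF y] unfolding k_def r_def
    by linarith
  then have "exp (k * transit_time s H) \<le> 3 * (k * pi / r)"
    using y by (simp add: ln_ge_iff)
  then show ?thesis
    using \<open>r > 0\<close> unfolding r_def[symmetric] by (simp add: exp_minus field_simps)
qed

text \<open>Near the unstable equilibrium \<open>1 / pendulum_speed s H x \<le> 1 / sqrt (k\<^sup>2 x\<^sup>2 + 2 H)\<close>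
  with \<open>k = sqrt (s / 6)\<close>, whose integral grows only like \<open>log (1 / H) / k\<close>.\<close>
lemma energy_le_exp_transit_time:
  assumes s: "s > 0" and H: "H > 0" and slow: "pi < sqrt s * transit_time s H"
  shows "H \<le> 15 / 2 * s * exp (- 2 / 3 * sqrt s * transit_time s H)"
proof -
  define T k where "T = transit_time s H" and "k = sqrt (s / 6)"
  have "T > 0"
    using slow s pi_gt_zero unfolding T_def by (smt (verit) mult_nonneg_nonpos real_sqrt_ge_zero)
  have "2 * H = (sqrt (2 * H))\<^sup>2"
    using H by simp
  also have "\<dots> \<le> (3 * k * pi * exp (- (k * T)))\<^sup>2"
    using sqrt_energy_le_exp_transit_time[OF s H slow] H unfolding k_def T_def
    by (intro power_mono) auto
  also have "\<dots> = 3 / 2 * s * pi\<^sup>2 * exp (- (2 * k * T))"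
  proof -
    have "k\<^sup>2 = s / 6"
      using s by (simp add: k_def)
    moreover have "(exp (- (k * T)))\<^sup>2 = exp (- (2 * k * T))"
      using exp_double[of "- (k * T)"] by (simp add: mult.assoc)
    ultimately show ?thesis
      by (simp add: power_mult_distrib)
  qed
  also have "\<dots> \<le> 3 / 2 * s * 10 * exp (- (2 * k * T))"
  proof -
    have "pi\<^sup>2 \<le> 3.15\<^sup>2"
      using pi_approx pi_gt_zero by (intro power_mono) auto
    then have "pi\<^sup>2 \<le> 10"
      by (simp add: power2_eq_square)
    then show ?thesis
      using s by (intro mult_right_mono[OF mult_left_mono]) auto
  qed
  also have "\<dots> \<le> 15 * s * exp (- 2 / 3 * sqrt s * T)"
  proof -
    have "sqrt (9::real) = 3"
      by (simp add: real_sqrt_unique)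
    then have "sqrt s / 3 = sqrt (s / 9)"
      by (simp add: real_sqrt_divide)
    also have "\<dots> \<le> k"
      unfolding k_def using s by (intro real_sqrt_le_mono) simp
    finally have "exp (- (2 * k * T)) \<le> exp (- 2 / 3 * sqrt s * T)"
      using \<open>T > 0\<close> by (simp add: mult_right_mono)
    then show ?thesis
      using s by simp
  qed
  finally show ?thesis
    unfolding T_def by simp
qed

lemma energy_le_exp_speed:
  assumes s: "s > 0" and H: "H > 0" and T: "transit_time s H > 0"
    and speed: "pi / transit_time s H \<le> \<omega>" and slow: "\<omega> < sqrt s"
  shows "H \<le> 15 / 2 * s * exp (- 2 * sqrt s / \<omega>)"
proof -
  let ?T = "transit_time s H"
  have "pi \<le> \<omega> * ?T"
    using speed T by (simp add: divide_le_eq)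
  then have "\<omega> > 0"
    using T pi_gt_zero by (smt (verit) mult_nonpos_nonneg)
  have "\<omega> * ?T < sqrt s * ?T"
    using slow T by simp
  then have "H \<le> 15 / 2 * s * exp (- 2 / 3 * sqrt s * ?T)"
    using energy_le_exp_transit_time[OF s H] \<open>pi \<le> \<omega> * ?T\<close> by linarith
  also have "\<dots> \<le> 15 / 2 * s * exp (- 2 * sqrt s / \<omega>)"
  proof -
    have "3 / \<omega> \<le> ?T"
      using \<open>pi \<le> \<omega> * ?T\<close> pi_gt3 \<open>\<omega> > 0\<close> by (simp add: divide_le_eq mult.commute)
    then have "2 / 3 * sqrt s * (3 / \<omega>) \<le> 2 / 3 * sqrt s * ?T"
      using s by (intro mult_left_mono) auto
    then have "2 * sqrt s / \<omega> \<le> 2 / 3 * sqrt s * ?T"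
      by simp
    then show ?thesis
      using s by simp
  qed
  finally show ?thesis .
qed

lemma swing_action_diff_le_exp:
  assumes s: "s > 0" and H: "H > 0" "H' > 0"
    and T: "transit_time s H > 0" "transit_time s H' > 0"
    and speed: "pi / transit_time s H \<le> \<omega>" "pi / transit_time s H' \<le> \<omega>" and slow: "\<omega> < sqrt s"
  shows "\<bar>swing_action s H - swing_action s H'\<bar>
           \<le> 15 / 2 * s * exp (- 2 * sqrt s / \<omega>) * \<bar>transit_time s H - transit_time s H'\<bar>"
proof -
  have "max H H' \<le> 15 / 2 * s * exp (- 2 * sqrt s / \<omega>)"
    using energy_le_exp_speed[OF s H(1) T(1) speed(1) slow]
      energy_le_exp_speed[OF s H(2) T(2) speed(2) slow] by simp
  then show ?thesis
    using swing_action_diff_le[of s H H'] s H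
    by (smt (verit) abs_ge_zero mult_right_mono)
qed

definition EL_rotation :: "real \<Rightarrow> (real \<Rightarrow> real) \<Rightarrow> real \<Rightarrow> real \<Rightarrow> real \<Rightarrow> bool" where
  "EL_rotation s q t0 t1 t2 \<longleftrightarrow> t0 < t1 \<and> t1 < t2 \<and> continuous_on {t0..t2} q \<and>
     EL_sol s q t0 t1 \<and> EL_sol s q t1 t2 \<and> q t0 = 0 \<and> q t1 = pi \<and> q t2 = 2 * pi"

lemma EL_rotation_action:
  assumes s: "s > 0" and "EL_rotation s q t0 t1 t2"
  obtains H1 H2 where "H1 > 0" "H2 > 0" "transit_time s H1 = t1 - t0" "transit_time s H2 = t2 - t1"
    "action s q t0 t2 = swing_action s H1 + swing_action s H2"
proof -
  have "t0 < t1" "t1 < t2" and cont: "continuous_on {t0..t2} q"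
    and EL: "EL_sol s q t0 t1" "EL_sol s q t1 t2" and ends: "q t0 = 0" "q t1 = 0 + pi" "q t2 = pi + pi"
    using assms(2) by (auto simp: EL_rotation_def)
  have "continuous_on {t0..t1} q" "continuous_on {t1..t2} q"
    using cont \<open>t0 < t1\<close> \<open>t1 < t2\<close> by (auto intro: continuous_on_subset)
  obtain H1 where H1: "H1 > 0" "transit_time s H1 = t1 - t0"
      "((\<lambda>t. lagr s (q t) (deriv q t)) has_integral swing_action s H1) {t0..t1}"
    using EL_sol_half_swing[OF s \<open>t0 < t1\<close> \<open>continuous_on {t0..t1} q\<close> EL(1) ends(1,2)] by auto
  obtain H2 where H2: "H2 > 0" "transit_time s H2 = t2 - t1"
      "((\<lambda>t. lagr s (q t) (deriv q t)) has_integral swing_action s H2) {t1..t2}"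
    using EL_sol_half_swing[OF s \<open>t1 < t2\<close> \<open>continuous_on {t1..t2} q\<close> EL(2) _ ends(3)] ends(2) by auto
  have "action s q t0 t2 = swing_action s H1 + swing_action s H2"
    unfolding action_def using \<open>t0 < t1\<close> \<open>t1 < t2\<close>
    by (intro integral_unique has_integral_combine[OF _ _ H1(3) H2(3)]) auto
  with H1 H2 show ?thesis using that by blast
qed

lemma EL_rotation_action_diff_le:
  assumes s: "s > 0" and qb: "EL_rotation s qb t0 t1b t2" and qt: "EL_rotation s qt t0 t1t t2"
    and speeds: "pi / (t1b - t0) \<le> \<omega>" "pi / (t2 - t1b) \<le> \<omega>" "pi / (t1t - t0) \<le> \<omega>" "pi / (t2 - t1t) \<le> \<omega>"
    and slow: "\<omega> < sqrt s"
  shows "\<bar>action s qb t0 t2 - action s qt t0 t2\<bar> \<le> 15 * \<bar>t1b - t1t\<bar> * s * exp (- 2 * sqrt s / \<omega>)"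
proof -
  obtain Hb1 Hb2 where Hb: "Hb1 > 0" "Hb2 > 0" "transit_time s Hb1 = t1b - t0" "transit_time s Hb2 = t2 - t1b"
      "action s qb t0 t2 = swing_action s Hb1 + swing_action s Hb2"
    using EL_rotation_action[OF s qb] by blast
  obtain Ht1 Ht2 where Ht: "Ht1 > 0" "Ht2 > 0" "transit_time s Ht1 = t1t - t0" "transit_time s Ht2 = t2 - t1t"
      "action s qt t0 t2 = swing_action s Ht1 + swing_action s Ht2"
    using EL_rotation_action[OF s qt] by blast
  have times: "t0 < t1b" "t1b < t2" "t0 < t1t" "t1t < t2"
    using qb qt by (auto simp: EL_rotation_def)
  let ?B = "15 / 2 * s * exp (- 2 * sqrt s / \<omega>)"
  have "\<bar>action s qb t0 t2 - action s qt t0 t2\<bar>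
      \<le> \<bar>swing_action s Hb1 - swing_action s Ht1\<bar> + \<bar>swing_action s Hb2 - swing_action s Ht2\<bar>"
    unfolding Hb(5) Ht(5) by linarith
  also have "\<dots> \<le> ?B * \<bar>(t1b - t0) - (t1t - t0)\<bar> + ?B * \<bar>(t2 - t1b) - (t2 - t1t)\<bar>"
    using swing_action_diff_le_exp[OF s Hb(1) Ht(1)] swing_action_diff_le_exp[OF s Hb(2) Ht(2)]
      Hb(3,4) Ht(3,4) times speeds slow by (intro add_mono) simp_all
  also have "\<dots> = 15 * \<bar>t1b - t1t\<bar> * s * exp (- 2 * sqrt s / \<omega>)"
    by (simp add: abs_minus_commute)
  finally show ?thesis .
qed

lemma sqrt_sigma: "n \<ge> 1 \<Longrightarrow> sqrt (sigma a n) = real n powr (- a / 2)"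
  by (simp add: sigma_def powr_half_sqrt[symmetric] powr_powr)

theorem lemma2p3:
  fixes a \<epsilon> :: real
  assumes "a > 0" and "\<epsilon> > 0"
  shows "\<exists>C1>0. \<exists>C2>0. \<forall>(n::nat) t0 t2 t1b t1t (qb::real\<Rightarrow>real) (qt::real\<Rightarrow>real).
    n \<ge> 1 \<longrightarrow> t0 < t1b \<longrightarrow> t1b < t2 \<longrightarrow> t0 < t1t \<longrightarrow> t1t < t2 \<longrightarrow>
    continuous_on {t0..t2} qb \<longrightarrow>
    EL_sol (sigma a n) qb t0 t1b \<longrightarrow> EL_sol (sigma a n) qb t1b t2 \<longrightarrow>
    qb t0 = 0 \<longrightarrow> qb t1b = pi \<longrightarrow> qb t2 = 2 * pi \<longrightarrow>
    continuous_on {t0..t2} qt \<longrightarrow>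
    EL_sol (sigma a n) qt t0 t1t \<longrightarrow> EL_sol (sigma a n) qt t1t t2 \<longrightarrow>
    qt t0 = 0 \<longrightarrow> qt t1t = pi \<longrightarrow> qt t2 = 2 * pi \<longrightarrow>
    (let \<omega> = Max {\<bar>pi / (t1b - t0)\<bar>, \<bar>pi / (t2 - t1b)\<bar>,
                   \<bar>pi / (t1t - t0)\<bar>, \<bar>pi / (t2 - t1t)\<bar>}
     in \<omega> < real n powr (- a / 2 - \<epsilon>) \<longrightarrow>
        \<bar>action (sigma a n) qb t0 t2 - action (sigma a n) qt t0 t2\<bar>
          \<le> C1 * \<bar>t1b - t1t\<bar> * sigma a n * exp (- C2 * sqrt (sigma a n) / \<omega>))"
proof -
  have bound: "\<bar>action (sigma a n) qb t0 t2 - action (sigma a n) qt t0 t2\<bar>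
      \<le> 15 * \<bar>t1b - t1t\<bar> * sigma a n * exp (- 2 * sqrt (sigma a n) / \<omega>)"
    if "n \<ge> 1" "EL_rotation (sigma a n) qb t0 t1b t2" "EL_rotation (sigma a n) qt t0 t1t t2"
      and \<omega>: "\<omega> = Max {\<bar>pi / (t1b - t0)\<bar>, \<bar>pi / (t2 - t1b)\<bar>, \<bar>pi / (t1t - t0)\<bar>, \<bar>pi / (t2 - t1t)\<bar>}"
      and "\<omega> < real n powr (- a / 2 - \<epsilon>)"
    for n :: nat and t0 t2 t1b t1t \<omega> :: real and qb qt :: "real \<Rightarrow> real"
  proof (rule EL_rotation_action_diff_le[OF _ that(2,3)])
    show "sigma a n > 0"
      using \<open>n \<ge> 1\<close> by (simp add: sigma_def)
    have "real n powr (- a / 2 - \<epsilon>) \<le> real n powr (- a / 2)"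
      using \<open>n \<ge> 1\<close> \<open>\<epsilon> > 0\<close> by (intro powr_mono) auto
    then show "\<omega> < sqrt (sigma a n)"
      using \<open>\<omega> < real n powr (- a / 2 - \<epsilon>)\<close> \<open>n \<ge> 1\<close> by (simp add: sqrt_sigma)
  qed (unfold \<omega>, (rule order_trans[OF abs_ge_self Max_ge]; simp)+)
  show ?thesis
    unfolding Let_def
    by (rule exI[of _ 15], rule conjI, simp, rule exI[of _ 2], rule conjI, simp,
        intro allI impI, rule bound) (auto simp: EL_rotation_def)
qed

end
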